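(* Let $G$ be a finite simple graph and let $\mathcal{V}$ be a maximum-cardinality collection of pairwise edge-disjoint triangles of $G$. In the lend relation, every type-$1$ triangle $\psi^1\in\mathcal{V}$ is related to at most one $\psi\in\mathcal{V}$.
   Context: Triangles are sets of three pairwise adjacent vertices, identified with their edge sets. A triangle $t\notin\mathcal{V}$ is singly-attached to $\psi\in\mathcal{V}$ if $\psi$ is the only triangle of $\mathcal{V}$ sharing an edge with $t$; the shared edge is a base-edge and the vertex of $V(t)\setminus V(\psi)$ is its anchoring vertex. For $\psi\in\mathcal{V}$, $base(\psi)$ is the set of edges of $\psi$ that are base-edges of triangles singly-attached to $\psi$; $\psi$ has type $i$ if $|base(\psi)|=i$. A triangle $t\notin\mathcal{V}$ is doubly-attached to $\psi,\psi'\in\mathcal{V}$ if these are exactly the triangles of $\mathcal{V}$ sharing an edge with $t$. For a type-$1$ triangle $\psi^1$ with exactly one singly-attached triangle, $anchor(\psi^1)$ denotes that triangle's anchoring vertex. Lend relation: $(\psi^1,\psi)$ with $\psi^1$ of type $1$ and $\psi$ of type $1$ or $3$ is in the lend relation if exactly one triangle is singly-attached to $\psi^1$ and there exist two triangles $t_1,t_2$ both doubly-attached to $\psi^1$ and $\psi$ such that $V(t_1)\cup V(t_2)=V(\psi^1)\cup\{anchor(\psi^1)\}$ and this set induces a $K_4$. *)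

theory Defs
  imports Main
begin

definition simple_graph :: "'a set \<Rightarrow> 'a set set \<Rightarrow> bool" where
  "simple_graph V E \<longleftrightarrow> finite V \<and> (\<forall>e\<in>E. e \<subseteq> V \<and> card e = 2)"

definition triangle :: "'a set set \<Rightarrow> 'a set \<Rightarrow> bool" where
  "triangle E T \<longleftrightarrow> card T = 3 \<and> (\<forall>u\<in>T. \<forall>v\<in>T. u \<noteq> v \<longrightarrow> {u, v} \<in> E)"

text \<open>Edge set of a triangle (triangles are identified with their edge sets).\<close>
definition tri_edges :: "'a set \<Rightarrow> 'a set set" where
  "tri_edges T = {e. e \<subseteq> T \<and> card e = 2}"

definition shares_edge :: "'a set \<Rightarrow> 'a set \<Rightarrow> bool" where
  "shares_edge t s \<longleftrightarrow> tri_edges t \<inter> tri_edges s \<noteq> {}"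

definition tri_packing :: "'a set set \<Rightarrow> 'a set set \<Rightarrow> bool" where
  "tri_packing E \<V> \<longleftrightarrow> (\<forall>T\<in>\<V>. triangle E T) \<and>
     (\<forall>T\<in>\<V>. \<forall>S\<in>\<V>. T \<noteq> S \<longrightarrow> tri_edges T \<inter> tri_edges S = {})"

definition max_tri_packing :: "'a set set \<Rightarrow> 'a set set \<Rightarrow> bool" where
  "max_tri_packing E \<V> \<longleftrightarrow> tri_packing E \<V> \<and> finite \<V> \<and>
     (\<forall>\<W>. tri_packing E \<W> \<longrightarrow> card \<W> \<le> card \<V>)"

definition singly_attached :: "'a set set \<Rightarrow> 'a set set \<Rightarrow> 'a set \<Rightarrow> 'a set \<Rightarrow> bool" where
  "singly_attached E \<V> t \<psi> \<longleftrightarrow> triangle E t \<and> t \<notin> \<V> \<and> \<psi> \<in> \<V> \<and>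
     {\<phi>\<in>\<V>. shares_edge t \<phi>} = {\<psi>}"

definition base :: "'a set set \<Rightarrow> 'a set set \<Rightarrow> 'a set \<Rightarrow> 'a set set" where
  "base E \<V> \<psi> = {e. \<exists>t. singly_attached E \<V> t \<psi> \<and> e \<in> tri_edges t \<inter> tri_edges \<psi>}"

definition has_type :: "'a set set \<Rightarrow> 'a set set \<Rightarrow> 'a set \<Rightarrow> nat \<Rightarrow> bool" where
  "has_type E \<V> \<psi> i \<longleftrightarrow> \<psi> \<in> \<V> \<and> card (base E \<V> \<psi>) = i"

definition doubly_attached :: "'a set set \<Rightarrow> 'a set set \<Rightarrow> 'a set \<Rightarrow> 'a set \<Rightarrow> 'a set \<Rightarrow> bool" where
  "doubly_attached E \<V> t \<psi> \<psi>' \<longleftrightarrow> triangle E t \<and> t \<notin> \<V> \<and> \<psi> \<in> \<V> \<and> \<psi>' \<in> \<V> \<and> \<psi> \<noteq> \<psi>' \<and>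
     {\<phi>\<in>\<V>. shares_edge t \<phi>} = {\<psi>, \<psi>'}"

definition anchor :: "'a set set \<Rightarrow> 'a set set \<Rightarrow> 'a set \<Rightarrow> 'a" where
  "anchor E \<V> \<psi> = (THE x. \<exists>t. singly_attached E \<V> t \<psi> \<and> t - \<psi> = {x})"

definition lend :: "'a set set \<Rightarrow> 'a set set \<Rightarrow> 'a set \<Rightarrow> 'a set \<Rightarrow> bool" where
  "lend E \<V> \<psi>1 \<psi> \<longleftrightarrow>
     has_type E \<V> \<psi>1 1 \<and> (has_type E \<V> \<psi> 1 \<or> has_type E \<V> \<psi> 3) \<and>
     (\<exists>!t. singly_attached E \<V> t \<psi>1) \<and>
     (\<exists>t1 t2. t1 \<noteq> t2 \<and> doubly_attached E \<V> t1 \<psi>1 \<psi> \<and> doubly_attached E \<V> t2 \<psi>1 \<psi> \<and>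
        t1 \<union> t2 = \<psi>1 \<union> {anchor E \<V> \<psi>1} \<and>
        card (t1 \<union> t2) = 4 \<and>
        (\<forall>u\<in>t1 \<union> t2. \<forall>v\<in>t1 \<union> t2. u \<noteq> v \<longrightarrow> {u, v} \<in> E))"

end

theory Submission
  imports Defs
begin

text \<open>Both triangles witnessing a lend pair lie in the \<open>K\<^sub>4\<close> on \<open>\<psi>\<^sub>1 \<union> {anchor \<psi>\<^sub>1}\<close> and differ
  from \<open>\<psi>\<^sub>1\<close>. This \<open>K\<^sub>4\<close> has only three triangles other than \<open>\<psi>\<^sub>1\<close>, so the witnessing pairs of two
  lend partners of \<open>\<psi>\<^sub>1\<close> share a triangle; but a triangle doubly attached to \<open>\<psi>\<^sub>1\<close> determines
  its second partner.\<close>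

lemma Int_nonempty_if_card_add_gt:
  assumes "finite C" "A \<subseteq> C" "B \<subseteq> C" "card C < card A + card B"
  shows "A \<inter> B \<noteq> {}"
proof
  assume "A \<inter> B = {}"
  then have "card A + card B = card (A \<union> B)"
    using assms(1-3) by (metis card_Un_disjoint finite_subset)
  also have "\<dots> \<le> card C"
    using assms(1-3) by (intro card_mono) auto
  finally show False
    using assms(4) by simp
qed

lemma card_three_subsets_of_card_four_but_one:
  assumes "finite S" "card S = 4" "P \<subseteq> S" "card P = 3"
  shows "card ({t. t \<subseteq> S \<and> card t = 3} - {P}) = 3"
proof -
  have "card {t. t \<subseteq> S \<and> card t = 3} = 4"
    using n_subsets[OF \<open>finite S\<close>, of 3] \<open>card S = 4\<close> by (simp add: numeral_eq_Suc)
  then show ?thesis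
    using assms(1,3,4) by (simp add: card_Diff_singleton)
qed

lemma doubly_attached_partner_unique:
  assumes "doubly_attached E \<V> t \<psi> \<phi>" "doubly_attached E \<V> t \<psi> \<phi>'"
  shows "\<phi> = \<phi>'"
  using assms unfolding doubly_attached_def by (metis doubleton_eq_iff)

lemma lend_witnesses_in_K4:
  assumes "lend E \<V> \<psi>1 \<psi>"
  obtains t1 t2 where "card (\<psi>1 \<union> {anchor E \<V> \<psi>1}) = 4" "t1 \<noteq> t2"
    "doubly_attached E \<V> t1 \<psi>1 \<psi>" "doubly_attached E \<V> t2 \<psi>1 \<psi>"
    "{t1, t2} \<subseteq> {t. t \<subseteq> \<psi>1 \<union> {anchor E \<V> \<psi>1} \<and> card t = 3} - {\<psi>1}"
proof -
  obtain t1 t2 where t12: "t1 \<noteq> t2"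
    "doubly_attached E \<V> t1 \<psi>1 \<psi>" "doubly_attached E \<V> t2 \<psi>1 \<psi>"
    "t1 \<union> t2 = \<psi>1 \<union> {anchor E \<V> \<psi>1}" "card (t1 \<union> t2) = 4"
    using assms unfolding lend_def by meson
  have "card t = 3" "t \<noteq> \<psi>1" if "doubly_attached E \<V> t \<psi>1 \<psi>" for t
  proof -
    from that have "triangle E t" "t \<notin> \<V>" "\<psi>1 \<in> \<V>"
      by (simp_all add: doubly_attached_def)
    then show "card t = 3" "t \<noteq> \<psi>1"
      by (auto simp: triangle_def)
  qed
  with t12 show ?thesis
    by (intro that[of t1 t2]) auto
qed

theorem lemma18:
  fixes V :: "'a set" and E :: "'a set set" and \<V> :: "'a set set"
  assumes "simple_graph V E"
    and "max_tri_packing E \<V>"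
    and "\<psi>1 \<in> \<V>" and "has_type E \<V> \<psi>1 1"
    and "\<psi> \<in> \<V>" and "\<psi>' \<in> \<V>"
    and "lend E \<V> \<psi>1 \<psi>" and "lend E \<V> \<psi>1 \<psi>'"
  shows "\<psi> = \<psi>'"
proof -
  define S where "S = \<psi>1 \<union> {anchor E \<V> \<psi>1}"
  define \<T> where "\<T> = {t. t \<subseteq> S \<and> card t = 3} - {\<psi>1}"
  note witnesses = lend_witnesses_in_K4[of E \<V> \<psi>1, folded S_def, folded \<T>_def]
  obtain t1 t2 where "card S = 4" "t1 \<noteq> t2" and t12: "doubly_attached E \<V> t1 \<psi>1 \<psi>"
      "doubly_attached E \<V> t2 \<psi>1 \<psi>" "{t1, t2} \<subseteq> \<T>"
    by (rule witnesses[OF \<open>lend E \<V> \<psi>1 \<psi>\<close>])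
  obtain t3 t4 where "t3 \<noteq> t4" and t34: "doubly_attached E \<V> t3 \<psi>1 \<psi>'"
      "doubly_attached E \<V> t4 \<psi>1 \<psi>'" "{t3, t4} \<subseteq> \<T>"
    by (rule witnesses[OF \<open>lend E \<V> \<psi>1 \<psi>'\<close>])
  have "card \<psi>1 = 3"
    using assms(2,3) unfolding max_tri_packing_def tri_packing_def triangle_def by blast
  moreover have "finite S"
    using \<open>card S = 4\<close> by (intro card_ge_0_finite) simp
  moreover have "\<psi>1 \<subseteq> S"
    unfolding S_def by blast
  ultimately have "card \<T> = 3"
    unfolding \<T>_def using \<open>card S = 4\<close> by (intro card_three_subsets_of_card_four_but_one)
  moreover have "finite \<T>"
    using \<open>card \<T> = 3\<close> by (intro card_ge_0_finite) simp
  ultimately have "{t1, t2} \<inter> {t3, t4} \<noteq> {}"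
    using t12(3) t34(3) \<open>t1 \<noteq> t2\<close> \<open>t3 \<noteq> t4\<close> by (intro Int_nonempty_if_card_add_gt) auto
  then obtain t where "doubly_attached E \<V> t \<psi>1 \<psi>" "doubly_attached E \<V> t \<psi>1 \<psi>'"
    using t12 t34 by blast
  then show ?thesis
    by (rule doubly_attached_partner_unique)
qed

end
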